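(* Consider the $N$-layer cascade of the context and let $2\le n\le N$. Let $\mathcal{M}=\prod_{j=1}^M z_j$ be a monomial appearing in $s_{n-1,L_{n-1}}^{(\ell_0)}$ for some $\ell_0\ge1$ and in no derivative $s_{n-1,L_{n-1}}^{(\ell)}$ with $1\le\ell<\ell_0$, with coefficient $C_{\mathcal{M}}$ in $s_{n-1,L_{n-1}}^{(\ell_0)}$, and such that every $Z_j$ belongs to $\mathscr{S}^{(k)}$ or $\mathscr{S}^{(N+k)}$ for some $1\le k\le n-1$, or to $\mathscr{S}^{(2N+1)}$. Assume: $\mathcal{M}$ is square-free and does not involve two disjoint pairs of variables corresponding to species that react together; and if $s_{n-1,L_{n-1}}$ divides $\mathcal{M}$, then for all $j_1,j_2$ such that $Z_{j_1}$ and $Z_{j_2}$ react together, $Z_{j_1}=S_{n-1,L_{n-1}}$ or $Z_{j_2}=S_{n-1,L_{n-1}}$. Then $\widehat{\mathcal{M}}:=s_{n,L_n-1}\mathcal{M}$ appears in $s_{n,L_n}^{(\ell_0+2)}$ and in no derivative $s_{n,L_n}^{(\ell)}$ with $1\le\ell<\ell_0+2$, and its coefficient in $s_{n,L_n}^{(\ell_0+2)}$ is $c_{n,L_n}a_{n,L_n}C_{\mathcal{M}}$.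
   Context: Species are capital letters, concentrations lower-case letters. Mass-action system: $\dot{\mathbf{x}}=\sum_{y\to y'}k_{yy'}\mathbf{x}^y(y'-y)$. Total derivative: $\dot\varphi=\sum_i\frac{\partial\varphi}{\partial x_i}\dot x_i$ with $\dot x_i$ replaced by the right-hand side; $\varphi^{(\ell)}$ the $\ell$-th iterate, a polynomial in concentrations with coefficients polynomial in the rate constants; a monomial appears if its coefficient is nonzero. A non-intermediate $X_1$ reacts with a non-intermediate $X_2$ if there is a reaction $X_1+X_2\to W$ with $W$ intermediate. Cascade: $N\ge1$, $L_1,\dots,L_N\ge1$. Non-intermediate species $E$, pairwise distinct $F_1,\dots,F_N$, and $S_{m,j}$ ($1\le m\le N$, $0\le j\le L_m$), all distinct; intermediates $U_{m,j},V_{m,j}$ ($1\le j\le L_m$), all distinct. $S_{0,L_0}:=E$. For each $m$, $1\le j\le L_m$: $S_{m-1,L_{m-1}}+S_{m,j-1}\to U_{m,j}$ (rate $a_{m,j}$), $U_{m,j}\to S_{m-1,L_{m-1}}+S_{m,j-1}$ ($b_{m,j}$), $U_{m,j}\to S_{m-1,L_{m-1}}+S_{m,j}$ ($c_{m,j}$), $F_m+S_{m,j}\to V_{m,j}$ ($\tilde a_{m,j}$), $V_{m,j}\to F_m+S_{m,j}$ ($\tilde b_{m,j}$), $V_{m,j}\to F_m+S_{m,j-1}$ ($\tilde c_{m,j}$). Partition of non-intermediates: $\mathscr{S}^{(m)}=\{S_{m,0},\dots,S_{m,L_m}\}$, $\mathscr{S}^{(N+m)}=\{F_m\}$ ($1\le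 m\le N$), $\mathscr{S}^{(2N+1)}=\{E\}$. *)

theory Defs
  imports "HOL-Library.Poly_Mapping"
begin

datatype species = E | F nat | S nat nat | U nat nat | V nat nat

fun intermediate :: "species \<Rightarrow> bool" where
  "intermediate (U m j) = True"
| "intermediate (V m j) = True"
| "intermediate _ = False"

text \<open>Rate constants a, b, c, a~, b~, c~ as formal indeterminates.\<close>
datatype rate = Ra nat nat | Rb nat nat | Rc nat nat | Rat nat nat | Rbt nat nat | Rct nat nat

type_synonym rpoly = "(rate \<Rightarrow>\<^sub>0 nat) \<Rightarrow>\<^sub>0 int"

type_synonym cpoly = "(species \<Rightarrow>\<^sub>0 nat) \<Rightarrow>\<^sub>0 rpoly"

type_synonym complex = "species \<Rightarrow>\<^sub>0 nat"

definition rconst :: "rate \<Rightarrow> rpoly" where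
  "rconst r = Poly_Mapping.single (Poly_Mapping.single r 1) 1"

definition cvar :: "species \<Rightarrow> cpoly" where
  "cvar X = Poly_Mapping.single (Poly_Mapping.single X 1) 1"

text \<open>S_{m-1, L_{m-1}}, with the convention S_{0,L_0} = E.\<close>
definition Sprev :: "(nat \<Rightarrow> nat) \<Rightarrow> nat \<Rightarrow> species" where
  "Sprev L m = (if m = 1 then E else S (m - 1) (L (m - 1)))"

definition cpx2 :: "species \<Rightarrow> species \<Rightarrow> complex" where
  "cpx2 X Y = Poly_Mapping.single X 1 + Poly_Mapping.single Y 1"

definition cpx1 :: "species \<Rightarrow> complex" where
  "cpx1 X = Poly_Mapping.single X 1"

text \<open>Reactions as triples (reactant complex, product complex, rate constant).\<close>
definition reactions :: "nat \<Rightarrow> (nat \<Rightarrow> nat) \<Rightarrow> (complex \<times> complex \<times> rate) set" where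
  "reactions N L = (\<Union>m\<in>{1..N}. \<Union>j\<in>{1..L m}.
     { (cpx2 (Sprev L m) (S m (j - 1)), cpx1 (U m j), Ra m j),
       (cpx1 (U m j), cpx2 (Sprev L m) (S m (j - 1)), Rb m j),
       (cpx1 (U m j), cpx2 (Sprev L m) (S m j), Rc m j),
       (cpx2 (F m) (S m j), cpx1 (V m j), Rat m j),
       (cpx1 (V m j), cpx2 (F m) (S m j), Rbt m j),
       (cpx1 (V m j), cpx2 (F m) (S m (j - 1)), Rct m j) })"

definition species_set :: "nat \<Rightarrow> (nat \<Rightarrow> nat) \<Rightarrow> species set" where
  "species_set N L = {E} \<union> F ` {1..N}
     \<union> {S m j | m j. 1 \<le> m \<and> m \<le> N \<and> j \<le> L m}
     \<union> {U m j | m j. 1 \<le> m \<and> m \<le> N \<and> 1 \<le> j \<and> j \<le> L m}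
     \<union> {V m j | m j. 1 \<le> m \<and> m \<le> N \<and> 1 \<le> j \<and> j \<le> L m}"

text \<open>Mass-action right-hand side for species X:
  sum over reactions y \<rightarrow> y' of k x^y (y'_X - y_X).\<close>
definition rhs :: "nat \<Rightarrow> (nat \<Rightarrow> nat) \<Rightarrow> species \<Rightarrow> cpoly" where
  "rhs N L X = (\<Sum>(y, y', r)\<in>reactions N L.
      Poly_Mapping.single y
        (rconst r * of_int (int (Poly_Mapping.lookup y' X) - int (Poly_Mapping.lookup y X))))"

definition pderiv_sp :: "species \<Rightarrow> cpoly \<Rightarrow> cpoly" where
  "pderiv_sp X p = (\<Sum>m\<in>Poly_Mapping.keys p.
      Poly_Mapping.single (m - Poly_Mapping.single X 1)
        (of_nat (Poly_Mapping.lookup m X) * Poly_Mapping.lookup p m))"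

definition tder :: "nat \<Rightarrow> (nat \<Rightarrow> nat) \<Rightarrow> cpoly \<Rightarrow> cpoly" where
  "tder N L p = (\<Sum>X\<in>species_set N L. pderiv_sp X p * rhs N L X)"

definition iterder :: "nat \<Rightarrow> (nat \<Rightarrow> nat) \<Rightarrow> nat \<Rightarrow> species \<Rightarrow> cpoly" where
  "iterder N L l X = (tder N L ^^ l) (cvar X)"

definition appears :: "complex \<Rightarrow> cpoly \<Rightarrow> bool" where
  "appears M p \<longleftrightarrow> Poly_Mapping.lookup p M \<noteq> 0"

definition reacts :: "nat \<Rightarrow> (nat \<Rightarrow> nat) \<Rightarrow> species \<Rightarrow> species \<Rightarrow> bool" where
  "reacts N L X1 X2 \<longleftrightarrow> \<not> intermediate X1 \<and> \<not> intermediate X2 \<and>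
     (\<exists>W r. intermediate W \<and> (cpx2 X1 X2, cpx1 W, r) \<in> reactions N L)"

text \<open>Membership in the blocks S^(k) (k in 1..n-1), S^(N+k) = {F_k}, or S^(2N+1) = {E}.\<close>
definition in_upper_layers :: "(nat \<Rightarrow> nat) \<Rightarrow> nat \<Rightarrow> species \<Rightarrow> bool" where
  "in_upper_layers L n X \<longleftrightarrow> X = E \<or>
     (\<exists>k. 1 \<le> k \<and> k \<le> n - 1 \<and> (X = F k \<or> (\<exists>j. j \<le> L k \<and> X = S k j)))"

definition square_free :: "complex \<Rightarrow> bool" where
  "square_free M \<longleftrightarrow> (\<forall>X. Poly_Mapping.lookup M X \<le> 1)"

end

theory Submission
  imports Defs
begin

text \<open>
  Write Sx = S_{n,L_n}, Ux = U_{n,L_n}, Sw = S_{n,L_n-1}, Sa = S_{n-1,L_{n-1}} and ka, kb, kc for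
  a_{n,L_n}, b_{n,L_n}, c_{n,L_n}. Up to irrelevant terms, the derivative of x_Sx is kc x_Ux and
  that of x_Ux is ka x_Sa x_Sw - (kb + kc) x_Ux; in all further derivatives x_Sw acts as an inert
  factor. Hence the coefficient phi(l, X) of x_Sw M in the l-th derivative of x_X satisfies
  phi(l+1, Sx) = kc phi(l, Ux) and phi(l+1, Ux) = ka C(l) - (kb + kc) phi(l, Ux), where C(l) is the
  coefficient of M in the l-th derivative of x_Sa. As C vanishes below l0, so does phi(-, Ux) up to
  l0 and phi(-, Sx) below l0 + 2, and phi(l0 + 2, Sx) = kc ka C(l0).

  The total derivative acts on monomials by moves: one factor X is replaced by the reactant
  complex of a reaction that changes X. The irrelevant terms lie in a set of monomials that is
  closed under moves, namely those with two factors of layer at least n, a factor (layer > n, F_n or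
  V_{n,j}) that can never be removed, a stray layer-n factor other than Sw together with an active
  sub-complex (Sa, an intermediate of an upper layer, or a reacting pair of upper species), or a
  factor of layer at least n together with two disjoint active sub-complexes. The hypotheses on
  M ensure that x_Sw M is not of this kind.
\<close>

lemma lookup_single_mult_add:
  fixes a :: "'a::cancel_comm_monoid_add" and p :: "'a \<Rightarrow>\<^sub>0 'b::comm_semiring_1"
  shows "Poly_Mapping.lookup (Poly_Mapping.single a c * p) (a + k) = c * Poly_Mapping.lookup p k"
proof -
  have "Poly_Mapping.lookup (Poly_Mapping.single a c * p) (a + k)
     = (\<Sum>l. (c when a = l) * (\<Sum>q. Poly_Mapping.lookup p q when a + k = l + q))"
    by (simp add: lookup_mult lookup_single)
  also have "\<dots> = c * (\<Sum>q. Poly_Mapping.lookup p q when a + k = a + q)"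
    by (simp add: when_mult)
  also have "(\<lambda>q. Poly_Mapping.lookup p q when a + k = a + q) = (\<lambda>q. Poly_Mapping.lookup p q when q = k)"
    by (auto simp: fun_eq_iff when_def)
  finally show ?thesis by simp
qed

lemma lookup_single_mult_eq_zero:
  fixes a :: "'a::cancel_comm_monoid_add" and p :: "'a \<Rightarrow>\<^sub>0 'b::comm_semiring_1"
  assumes "\<And>q. k \<noteq> a + q"
  shows "Poly_Mapping.lookup (Poly_Mapping.single a c * p) k = 0"
proof -
  have "Poly_Mapping.lookup (Poly_Mapping.single a c * p) k
     = (\<Sum>l. (c when a = l) * (\<Sum>q. Poly_Mapping.lookup p q when k = l + q))"
    by (simp add: lookup_mult lookup_single)
  also have "\<dots> = c * (\<Sum>q. Poly_Mapping.lookup p q when k = a + q)"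
    by (simp add: when_mult)
  also have "(\<lambda>q. Poly_Mapping.lookup p q when k = a + q) = (\<lambda>q. 0)"
    using assms by (auto simp: fun_eq_iff when_def)
  finally show ?thesis by simp
qed

lemma lookup_scale_mult:
  "Poly_Mapping.lookup (Poly_Mapping.single 0 r * (p :: 'a::cancel_comm_monoid_add \<Rightarrow>\<^sub>0 'b::comm_semiring_1)) k
     = r * Poly_Mapping.lookup p k"
  using lookup_single_mult_add[of 0 r p k] by simp

lemma rconst_mult_rconst_mult_neq_zero:
  assumes "p \<noteq> 0"
  shows "rconst a * rconst b * p \<noteq> 0"
proof -
  obtain k where k: "Poly_Mapping.lookup p k \<noteq> 0"
    using assms by (metis poly_mapping_eqI lookup_zero)
  have "rconst a * rconst b * p = Poly_Mapping.single (Poly_Mapping.single a 1 + Poly_Mapping.single b 1) 1 * p"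
    by (simp add: rconst_def mult_single)
  then have "Poly_Mapping.lookup (rconst a * rconst b * p) (Poly_Mapping.single a 1 + Poly_Mapping.single b 1 + k)
      = Poly_Mapping.lookup p k"
    by (simp add: lookup_single_mult_add)
  with k show ?thesis by auto
qed

lemma lookup_cpx1 [simp]: "Poly_Mapping.lookup (cpx1 X) Y = (if Y = X then 1 else 0)"
  by (simp add: cpx1_def lookup_single when_def)

lemma cpx2_eq_add: "cpx2 X Y = cpx1 X + cpx1 Y"
  by (simp add: cpx2_def cpx1_def)

lemma cvar_eq_single_cpx1: "cvar X = Poly_Mapping.single (cpx1 X) 1"
  by (simp add: cvar_def cpx1_def)

lemma add_cpx1_eq_cpx1_iff: "k + cpx1 X = cpx1 Z \<longleftrightarrow> X = Z \<and> k = 0"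
proof
  assume h: "k + cpx1 X = cpx1 Z"
  then have "Poly_Mapping.lookup (k + cpx1 X) X = Poly_Mapping.lookup (cpx1 Z) X" by simp
  then have "X = Z" by (auto simp: lookup_add split: if_splits)
  with h show "X = Z \<and> k = 0" by (metis add_0 add_right_cancel)
qed auto

lemma cpx1_eq_add_cpx1_iff: "cpx1 Z = k + cpx1 X \<longleftrightarrow> X = Z \<and> k = 0"
  using add_cpx1_eq_cpx1_iff by metis

lemma minus_cpx1_add_cpx1:
  "1 \<le> Poly_Mapping.lookup m X \<Longrightarrow> m - cpx1 X + cpx1 X = m"
  by (intro poly_mapping_eqI) (auto simp: lookup_add lookup_minus)

lemma add_cpx1_minus_cpx1 [simp]: "m + cpx1 X - cpx1 X = m"
  by (intro poly_mapping_eqI) (simp add: lookup_add lookup_minus)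

fun reactant :: "(nat \<Rightarrow> nat) \<Rightarrow> rate \<Rightarrow> complex" where
  "reactant L (Ra m j) = cpx2 (Sprev L m) (S m (j - 1))"
| "reactant L (Rb m j) = cpx1 (U m j)"
| "reactant L (Rc m j) = cpx1 (U m j)"
| "reactant L (Rat m j) = cpx2 (F m) (S m j)"
| "reactant L (Rbt m j) = cpx1 (V m j)"
| "reactant L (Rct m j) = cpx1 (V m j)"

fun reaction_product :: "(nat \<Rightarrow> nat) \<Rightarrow> rate \<Rightarrow> complex" where
  "reaction_product L (Ra m j) = cpx1 (U m j)"
| "reaction_product L (Rb m j) = cpx2 (Sprev L m) (S m (j - 1))"
| "reaction_product L (Rc m j) = cpx2 (Sprev L m) (S m j)"
| "reaction_product L (Rat m j) = cpx1 (V m j)"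
| "reaction_product L (Rbt m j) = cpx2 (F m) (S m j)"
| "reaction_product L (Rct m j) = cpx2 (F m) (S m (j - 1))"

fun rate_index :: "rate \<Rightarrow> nat \<times> nat" where
  "rate_index (Ra m j) = (m, j)" | "rate_index (Rb m j) = (m, j)" | "rate_index (Rc m j) = (m, j)"
| "rate_index (Rat m j) = (m, j)" | "rate_index (Rbt m j) = (m, j)" | "rate_index (Rct m j) = (m, j)"

definition rates :: "nat \<Rightarrow> (nat \<Rightarrow> nat) \<Rightarrow> rate set" where
  "rates N L = (\<Union>m\<in>{1..N}. \<Union>j\<in>{1..L m}. {Ra m j, Rb m j, Rc m j, Rat m j, Rbt m j, Rct m j})"

lemma mem_rates_iff:
  "r \<in> rates N L \<longleftrightarrow> (case rate_index r of (m, j) \<Rightarrow> 1 \<le> m \<and> m \<le> N \<and> 1 \<le> j \<and> j \<le> L m)"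
  by (cases r) (auto simp: rates_def)

lemma finite_rates: "finite (rates N L)"
  unfolding rates_def by auto

lemma reactions_eq_image_rates:
  "reactions N L = (\<lambda>r. (reactant L r, reaction_product L r, r)) ` rates N L"
  unfolding reactions_def rates_def image_UN by simp

definition net_change :: "(nat \<Rightarrow> nat) \<Rightarrow> rate \<Rightarrow> species \<Rightarrow> rpoly" where
  "net_change L r X = of_int (int (Poly_Mapping.lookup (reaction_product L r) X)
                                - int (Poly_Mapping.lookup (reactant L r) X))"

lemma rhs_eq_sum_rates:
  "rhs N L X = (\<Sum>r\<in>rates N L. Poly_Mapping.single (reactant L r) (rconst r * net_change L r X))"
proof -
  have inj: "inj_on (\<lambda>r. (reactant L r, reaction_product L r, r)) (rates N L)"
    by (rule inj_onI) simp
  show ?thesis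
    unfolding rhs_def reactions_eq_image_rates sum.reindex[OF inj] by (simp add: net_change_def)
qed

lemma keys_rhs:
  assumes "k \<in> Poly_Mapping.keys (rhs N L X)"
  obtains r where "r \<in> rates N L" "k = reactant L r"
    "Poly_Mapping.lookup (reaction_product L r) X \<noteq> Poly_Mapping.lookup (reactant L r) X"
proof -
  have "k \<in> (\<Union>r\<in>rates N L.
      Poly_Mapping.keys (Poly_Mapping.single (reactant L r) (rconst r * net_change L r X)))"
    using assms unfolding rhs_eq_sum_rates by (rule subsetD[OF keys_sum])
  then obtain r where r: "r \<in> rates N L"
    and k: "k \<in> Poly_Mapping.keys (Poly_Mapping.single (reactant L r) (rconst r * net_change L r X))"
    by (rule UN_E)
  from k have "k = reactant L r"
    "Poly_Mapping.lookup (reaction_product L r) X \<noteq> Poly_Mapping.lookup (reactant L r) X"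
    by (auto simp: net_change_def split: if_splits)
  with r that show ?thesis by blast
qed

lemma finite_species_set: "finite (species_set N L)"
proof -
  let ?I = "SIGMA m:{1..N}. {0..L m}"
  have "species_set N L \<subseteq> {E} \<union> F ` {1..N} \<union> (\<lambda>(m, j). S m j) ` ?I
      \<union> (\<lambda>(m, j). U m j) ` ?I \<union> (\<lambda>(m, j). V m j) ` ?I"
    unfolding species_set_def by force
  moreover have "finite ({E} \<union> F ` {1..N} \<union> (\<lambda>(m, j). S m j) ` ?I
      \<union> (\<lambda>(m, j). U m j) ` ?I \<union> (\<lambda>(m, j). V m j) ` ?I)"
    by (intro finite_UnI finite_imageI) auto
  ultimately show ?thesis by (rule finite_subset)
qed

section \<open>The total derivative is a derivation\<close>

lemma lookup_pderiv_sp: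
  "Poly_Mapping.lookup (pderiv_sp X p) k
     = of_nat (Poly_Mapping.lookup k X + 1) * Poly_Mapping.lookup p (k + cpx1 X)"
proof -
  have "Poly_Mapping.lookup (pderiv_sp X p) k
     = (\<Sum>m\<in>Poly_Mapping.keys p.
          of_nat (Poly_Mapping.lookup m X) * Poly_Mapping.lookup p m when m - cpx1 X = k)"
    by (simp add: pderiv_sp_def lookup_sum lookup_single cpx1_def)
  also have "\<dots> = (\<Sum>m\<in>Poly_Mapping.keys p.
      if m = k + cpx1 X then of_nat (Poly_Mapping.lookup m X) * Poly_Mapping.lookup p m else 0)"
  proof (rule sum.cong[OF refl])
    fix m
    show "(of_nat (Poly_Mapping.lookup m X) * Poly_Mapping.lookup p m when m - cpx1 X = k)
      = (if m = k + cpx1 X then of_nat (Poly_Mapping.lookup m X) * Poly_Mapping.lookup p m else 0)"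
    proof (cases "m = k + cpx1 X")
      case False
      then have "Poly_Mapping.lookup m X = 0" if "m - cpx1 X = k"
        using that minus_cpx1_add_cpx1[of m X] by force
      with False show ?thesis by (auto simp: when_def)
    qed simp
  qed
  also have "\<dots> = of_nat (Poly_Mapping.lookup k X + 1) * Poly_Mapping.lookup p (k + cpx1 X)"
    by (auto simp: lookup_add in_keys_iff)
  finally show ?thesis .
qed

lemma keys_pderiv_sp: "k \<in> Poly_Mapping.keys (pderiv_sp X p) \<Longrightarrow> k + cpx1 X \<in> Poly_Mapping.keys p"
  by (auto simp: in_keys_iff lookup_pderiv_sp)

lemma pderiv_sp_add: "pderiv_sp X (p + q) = pderiv_sp X p + pderiv_sp X q"
  by (intro poly_mapping_eqI) (simp add: lookup_pderiv_sp lookup_add algebra_simps)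

lemma pderiv_sp_scale:
  "pderiv_sp X (Poly_Mapping.single 0 r * p) = Poly_Mapping.single 0 r * pderiv_sp X p"
  by (intro poly_mapping_eqI) (simp add: lookup_pderiv_sp lookup_scale_mult mult.left_commute)

lemma pderiv_sp_cvar [simp]: "pderiv_sp X (cvar Z) = (if X = Z then 1 else 0)"
  by (intro poly_mapping_eqI)
    (auto simp: lookup_pderiv_sp cvar_eq_single_cpx1 lookup_single add_cpx1_eq_cpx1_iff
       cpx1_eq_add_cpx1_iff when_def lookup_one)

lemma lookup_cvar_mult:
  "Poly_Mapping.lookup (cvar w * p) k
     = (if 1 \<le> Poly_Mapping.lookup k w then Poly_Mapping.lookup p (k - cpx1 w) else 0)"
proof (cases "1 \<le> Poly_Mapping.lookup k w")
  case True
  then have "k = cpx1 w + (k - cpx1 w)"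
    using minus_cpx1_add_cpx1[of k w] by (simp add: add.commute)
  then have "Poly_Mapping.lookup (cvar w * p) k = Poly_Mapping.lookup p (k - cpx1 w)"
    by (metis cvar_eq_single_cpx1 lookup_single_mult_add mult_1)
  with True show ?thesis by simp
next
  case False
  then have "k \<noteq> cpx1 w + q" for q
    by (auto simp: lookup_add)
  with False show ?thesis
    by (simp add: cvar_eq_single_cpx1 lookup_single_mult_eq_zero)
qed

lemma pderiv_sp_cvar_mult:
  "pderiv_sp X (cvar w * p) = pderiv_sp X (cvar w) * p + cvar w * pderiv_sp X p"
proof (rule poly_mapping_eqI)
  fix k
  show "Poly_Mapping.lookup (pderiv_sp X (cvar w * p)) k
      = Poly_Mapping.lookup (pderiv_sp X (cvar w) * p + cvar w * pderiv_sp X p) k"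
  proof (cases "X = w")
    case True
    have "Poly_Mapping.lookup (pderiv_sp X (cvar w * p)) k
        = of_nat (Poly_Mapping.lookup k w + 1) * Poly_Mapping.lookup p k"
      by (simp add: True lookup_pderiv_sp lookup_cvar_mult lookup_add)
    also have "\<dots> = Poly_Mapping.lookup p k + of_nat (Poly_Mapping.lookup k w) * Poly_Mapping.lookup p k"
      by (simp add: distrib_right)
    also have "\<dots> = Poly_Mapping.lookup (pderiv_sp X (cvar w) * p + cvar w * pderiv_sp X p) k"
      by (cases "Poly_Mapping.lookup k w = 0")
        (simp_all add: True lookup_add lookup_cvar_mult lookup_pderiv_sp lookup_minus
           minus_cpx1_add_cpx1)
    finally show ?thesis .
  next
    case False
    then have "k + cpx1 X - cpx1 w = k - cpx1 w + cpx1 X"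
      by (intro poly_mapping_eqI) (auto simp: lookup_add lookup_minus)
    with False show ?thesis
      by (simp add: lookup_add lookup_cvar_mult lookup_pderiv_sp lookup_minus)
  qed
qed

lemma tder_add: "tder N L (p + q) = tder N L p + tder N L q"
  by (simp add: tder_def pderiv_sp_add distrib_right sum.distrib)

lemma tder_scale:
  "tder N L (Poly_Mapping.single 0 r * p) = Poly_Mapping.single 0 r * tder N L p"
  by (simp add: tder_def pderiv_sp_scale sum_distrib_left mult.assoc)

lemma tder_cvar:
  assumes "Z \<in> species_set N L"
  shows "tder N L (cvar Z) = rhs N L Z"
proof -
  have "tder N L (cvar Z) = (\<Sum>X\<in>species_set N L. if X = Z then rhs N L Z else 0)"
    unfolding tder_def by (intro sum.cong) auto
  then show ?thesis using assms finite_species_set by simp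
qed

lemma tder_cvar_mult:
  assumes "w \<in> species_set N L"
  shows "tder N L (cvar w * p) = rhs N L w * p + cvar w * tder N L p"
proof -
  have "tder N L (cvar w * p)
      = (\<Sum>X\<in>species_set N L. pderiv_sp X (cvar w) * rhs N L X) * p + cvar w * tder N L p"
    unfolding tder_def pderiv_sp_cvar_mult
    by (simp add: sum.distrib sum_distrib_left sum_distrib_right algebra_simps)
  also have "(\<Sum>X\<in>species_set N L. pderiv_sp X (cvar w) * rhs N L X) = rhs N L w"
    using tder_cvar[OF assms] by (simp add: tder_def)
  finally show ?thesis .
qed

lemma funpow_tder_add: "(tder N L ^^ k) (p + q) = (tder N L ^^ k) p + (tder N L ^^ k) q"
  by (induction k) (simp_all add: tder_add)

lemma funpow_tder_scale:
  "(tder N L ^^ k) (Poly_Mapping.single 0 r * p) = Poly_Mapping.single 0 r * (tder N L ^^ k) p"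
  by (induction k) (simp_all add: tder_scale)

section \<open>Monomials of the total derivative\<close>

text \<open>In the product of the partial derivative by x_X with the right-hand side for X, a monomial with
  exponent vector g turns into one with exponent vector g - X + y, for every reaction y \<rightarrow> y'
  that changes X.\<close>

definition move :: "(nat \<Rightarrow> nat) \<Rightarrow> (species \<Rightarrow> nat) \<Rightarrow> species \<Rightarrow> rate \<Rightarrow> species \<Rightarrow> nat" where
  "move L g X r = (\<lambda>Y. g Y - (if Y = X then 1 else 0) + Poly_Mapping.lookup (reactant L r) Y)"

definition admissible_move :: "nat \<Rightarrow> (nat \<Rightarrow> nat) \<Rightarrow> (species \<Rightarrow> nat) \<Rightarrow> species \<Rightarrow> rate \<Rightarrow> bool" where
  "admissible_move N L g X r \<longleftrightarrow> 1 \<le> g X \<and> r \<in> rates N L \<and>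
     Poly_Mapping.lookup (reaction_product L r) X \<noteq> Poly_Mapping.lookup (reactant L r) X"

definition move_closed :: "nat \<Rightarrow> (nat \<Rightarrow> nat) \<Rightarrow> ((species \<Rightarrow> nat) \<Rightarrow> bool) \<Rightarrow> bool" where
  "move_closed N L P \<longleftrightarrow> (\<forall>g X r. P g \<longrightarrow> admissible_move N L g X r \<longrightarrow> P (move L g X r))"

lemma keys_tder_move:
  assumes "m \<in> Poly_Mapping.keys (tder N L p)"
  obtains m' X r where "m' \<in> Poly_Mapping.keys p" "admissible_move N L (Poly_Mapping.lookup m') X r"
    "Poly_Mapping.lookup m = move L (Poly_Mapping.lookup m') X r"
proof -
  have "m \<in> (\<Union>X\<in>species_set N L. Poly_Mapping.keys (pderiv_sp X p * rhs N L X))"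
    using assms unfolding tder_def by (rule subsetD[OF keys_sum])
  then obtain X where "m \<in> Poly_Mapping.keys (pderiv_sp X p * rhs N L X)"
    by (rule UN_E)
  then obtain a b where ab: "m = a + b" "a \<in> Poly_Mapping.keys (pderiv_sp X p)"
    "b \<in> Poly_Mapping.keys (rhs N L X)"
    using keys_mult by blast
  from ab(3) obtain r where r: "r \<in> rates N L" "b = reactant L r"
    "Poly_Mapping.lookup (reaction_product L r) X \<noteq> Poly_Mapping.lookup (reactant L r) X"
    by (rule keys_rhs)
  show ?thesis
  proof (rule that)
    show "a + cpx1 X \<in> Poly_Mapping.keys p" using ab(2) by (rule keys_pderiv_sp)
    show "admissible_move N L (Poly_Mapping.lookup (a + cpx1 X)) X r"
      using r by (simp add: admissible_move_def lookup_add)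
    show "Poly_Mapping.lookup m = move L (Poly_Mapping.lookup (a + cpx1 X)) X r"
      using ab(1) r(2) by (auto simp: move_def lookup_add)
  qed
qed

lemma keys_funpow_tder_closed:
  assumes "move_closed N L P" "\<forall>m\<in>Poly_Mapping.keys p. P (Poly_Mapping.lookup m)"
  shows "\<forall>m\<in>Poly_Mapping.keys ((tder N L ^^ k) p). P (Poly_Mapping.lookup m)"
proof (induction k)
  case (Suc k)
  show ?case
  proof
    fix m assume "m \<in> Poly_Mapping.keys ((tder N L ^^ Suc k) p)"
    then obtain m' X r where "m' \<in> Poly_Mapping.keys ((tder N L ^^ k) p)"
      "admissible_move N L (Poly_Mapping.lookup m') X r"
      "Poly_Mapping.lookup m = move L (Poly_Mapping.lookup m') X r"
      by (auto elim: keys_tder_move)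
    with Suc assms(1) show "P (Poly_Mapping.lookup m)"
      unfolding move_closed_def by metis
  qed
qed (use assms(2) in simp)

lemma lookup_funpow_tder_eq_zero:
  assumes "move_closed N L P" "\<forall>m\<in>Poly_Mapping.keys p. P (Poly_Mapping.lookup m)"
    and "\<not> P (Poly_Mapping.lookup t)"
  shows "Poly_Mapping.lookup ((tder N L ^^ k) p) t = 0"
  using keys_funpow_tder_closed[OF assms(1,2), of k] assms(3) by (auto simp: in_keys_iff)

fun layer :: "species \<Rightarrow> nat" where
  "layer E = 0" | "layer (F k) = k" | "layer (S k j) = k" | "layer (U k j) = k" | "layer (V k j) = k"

lemma layer_Sprev: "1 \<le> k \<Longrightarrow> layer (Sprev L k) = k - 1"
  by (simp add: Sprev_def)

lemma Sprev_neq [simp]: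
  "Sprev L m \<noteq> U a b" "Sprev L m \<noteq> V a b" "Sprev L m \<noteq> F a"
  "U a b \<noteq> Sprev L m" "V a b \<noteq> Sprev L m" "F a \<noteq> Sprev L m" "\<not> intermediate (Sprev L m)"
  by (auto simp: Sprev_def)

lemma Sprev_eq_S_iff:
  "Sprev L k = S a b \<longleftrightarrow> k \<noteq> 1 \<and> a = k - 1 \<and> b = L (k - 1)"
  "S a b = Sprev L k \<longleftrightarrow> k \<noteq> 1 \<and> a = k - 1 \<and> b = L (k - 1)"
  by (auto simp: Sprev_def)

lemma lookup_reactant_U:
  "Poly_Mapping.lookup (reactant L r) (U a b) = (if r = Rb a b \<or> r = Rc a b then 1 else 0)"
  by (cases r) (auto simp: cpx2_eq_add lookup_add)

lemma lookup_reaction_product_U: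
  "Poly_Mapping.lookup (reaction_product L r) (U a b) = (if r = Ra a b then 1 else 0)"
  by (cases r) (auto simp: cpx2_eq_add lookup_add)

definition associates :: "nat \<Rightarrow> (nat \<Rightarrow> nat) \<Rightarrow> species \<Rightarrow> species \<Rightarrow> species \<Rightarrow> bool" where
  "associates N L P Q W \<longleftrightarrow> (\<exists>k j. 1 \<le> k \<and> k \<le> N \<and> 1 \<le> j \<and> j \<le> L k \<and>
     ((W = U k j \<and> P = Sprev L k \<and> Q = S k (j - 1)) \<or> (W = V k j \<and> P = F k \<and> Q = S k j)))"

definition dissociates :: "nat \<Rightarrow> (nat \<Rightarrow> nat) \<Rightarrow> species \<Rightarrow> species \<Rightarrow> bool" where
  "dissociates N L W X \<longleftrightarrow> (\<exists>k j. 1 \<le> k \<and> k \<le> N \<and> 1 \<le> j \<and> j \<le> L k \<and>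
     ((W = U k j \<and> (X = Sprev L k \<or> X = S k (j - 1) \<or> X = S k j)) \<or>
      (W = V k j \<and> (X = F k \<or> X = S k j \<or> X = S k (j - 1)))))"

lemma associates_layer:
  assumes "associates N L P Q W"
  shows "intermediate W" "\<not> intermediate P" "\<not> intermediate Q"
    "layer Q = layer W" "layer P \<le> layer W"
  using assms by (auto simp: associates_def layer_Sprev)

lemma dissociates_layer:
  assumes "dissociates N L W X"
  shows "intermediate W" "\<not> intermediate X" "layer X \<le> layer W"
  using assms by (auto simp: dissociates_def layer_Sprev)

lemma associates_reacts:
  assumes "associates N L P Q W"
  shows "reacts N L P Q"
proof -
  from assms obtain k j where kj: "1 \<le> k" "k \<le> N" "1 \<le> j" "j \<le> L k"
    and "(W = U k j \<and> P = Sprev L k \<and> Q = S k (j - 1)) \<or> (W = V k j \<and> P = F k \<and> Q = S k j)"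
    unfolding associates_def by blast
  then consider "W = U k j" "P = Sprev L k" "Q = S k (j - 1)" | "W = V k j" "P = F k" "Q = S k j"
    by blast
  then obtain r where "(cpx2 P Q, cpx1 W, r) \<in> reactions N L"
  proof cases
    case 1
    with kj have "(cpx2 P Q, cpx1 W, Ra k j) \<in> reactions N L"
      unfolding reactions_eq_image_rates by (force simp: mem_rates_iff)
    with that show thesis .
  next
    case 2
    with kj have "(cpx2 P Q, cpx1 W, Rat k j) \<in> reactions N L"
      unfolding reactions_eq_image_rates by (force simp: mem_rates_iff)
    with that show thesis .
  qed
  with associates_layer[OF assms] show ?thesis
    unfolding reacts_def by blast
qed

lemma admissible_move_cases:
  assumes "admissible_move N L g X r"
  obtains "1 \<le> Poly_Mapping.lookup (reactant L r) X"
  | P Q where "associates N L P Q X" "reactant L r = cpx1 P + cpx1 Q"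
  | W where "intermediate W" "dissociates N L W X" "reactant L r = cpx1 W"
proof -
  from assms have r: "r \<in> rates N L"
    and d: "Poly_Mapping.lookup (reaction_product L r) X \<noteq> Poly_Mapping.lookup (reactant L r) X"
    by (auto simp: admissible_move_def)
  show thesis
  proof (cases r)
    case (Ra m j)
    with r d that(2)[of "Sprev L m" "S m (j - 1)"] that(1) show ?thesis
      by (auto simp: mem_rates_iff associates_def cpx2_eq_add lookup_add split: if_splits)
  next
    case (Rb m j)
    with r d that(1) that(3)[of "U m j"] show ?thesis
      by (auto simp: mem_rates_iff dissociates_def cpx2_eq_add lookup_add split: if_splits)
  next
    case (Rc m j)
    with r d that(1) that(3)[of "U m j"] show ?thesis
      by (auto simp: mem_rates_iff dissociates_def cpx2_eq_add lookup_add split: if_splits)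
  next
    case (Rat m j)
    with r d that(2)[of "F m" "S m j"] that(1) show ?thesis
      by (auto simp: mem_rates_iff associates_def cpx2_eq_add lookup_add split: if_splits)
  next
    case (Rbt m j)
    with r d that(1) that(3)[of "V m j"] show ?thesis
      by (auto simp: mem_rates_iff dissociates_def cpx2_eq_add lookup_add split: if_splits)
  next
    case (Rct m j)
    with r d that(1) that(3)[of "V m j"] show ?thesis
      by (auto simp: mem_rates_iff dissociates_def cpx2_eq_add lookup_add split: if_splits)
  qed
qed

lemma move_ge: "Y \<noteq> X \<Longrightarrow> g Y \<le> move L g X r Y"
  by (simp add: move_def)

lemma reactant_le_move: "1 \<le> g X \<Longrightarrow> Poly_Mapping.lookup (reactant L r) \<le> move L g X r"
  by (auto simp: move_def le_fun_def)

lemma le_move_if_reactant: "1 \<le> Poly_Mapping.lookup (reactant L r) X \<Longrightarrow> 1 \<le> g X \<Longrightarrow> g \<le> move L g X r"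
  by (auto simp: move_def le_fun_def)

lemma lookup_le_move_keep:
  "Poly_Mapping.lookup c \<le> g \<Longrightarrow> Poly_Mapping.lookup c X + 1 \<le> g X
    \<Longrightarrow> Poly_Mapping.lookup c \<le> move L g X r"
  by (auto simp: move_def le_fun_def le_diff_conv intro: le_add1 order.trans)

lemma lookup_le_move_replace:
  assumes "Poly_Mapping.lookup (c + d) \<le> g" "1 \<le> Poly_Mapping.lookup c X"
    and "Poly_Mapping.lookup c' \<le> Poly_Mapping.lookup (reactant L r)"
  shows "Poly_Mapping.lookup (c' + d) \<le> move L g X r"
proof (rule le_funI)
  fix Y
  have "Poly_Mapping.lookup c Y + Poly_Mapping.lookup d Y \<le> g Y"
    using assms(1) by (auto simp: le_fun_def lookup_add)
  moreover have "Poly_Mapping.lookup c' Y \<le> Poly_Mapping.lookup (reactant L r) Y"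
    using assms(3) by (auto simp: le_fun_def)
  ultimately show "Poly_Mapping.lookup (c' + d) Y \<le> move L g X r Y"
    using assms(2) by (auto simp: move_def lookup_add)
qed

lemma lookup_cpx1_add_cpx1_le_iff:
  "Poly_Mapping.lookup (cpx1 Y1 + cpx1 Y2) \<le> g
     \<longleftrightarrow> (if Y1 = Y2 then 2 \<le> g Y1 else 1 \<le> g Y1 \<and> 1 \<le> g Y2)"
  by (auto simp: le_fun_def lookup_add)

definition reactant_closed :: "nat \<Rightarrow> (nat \<Rightarrow> nat) \<Rightarrow> (species \<Rightarrow> bool) \<Rightarrow> bool" where
  "reactant_closed N L Pi \<longleftrightarrow> (\<forall>g X r. admissible_move N L g X r \<longrightarrow> Pi X \<longrightarrow>
     (\<exists>T. Pi T \<and> 1 \<le> Poly_Mapping.lookup (reactant L r) T))"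

lemma reactant_closedI:
  assumes "\<And>P Q W. associates N L P Q W \<Longrightarrow> Pi W \<Longrightarrow> Pi P \<or> Pi Q"
    and "\<And>W X. dissociates N L W X \<Longrightarrow> Pi X \<Longrightarrow> Pi W"
  shows "reactant_closed N L Pi"
  unfolding reactant_closed_def
proof (intro allI impI)
  fix g X r assume mv: "admissible_move N L g X r" and X: "Pi X"
  show "\<exists>T. Pi T \<and> 1 \<le> Poly_Mapping.lookup (reactant L r) T"
  proof (cases rule: admissible_move_cases[OF mv])
    case 1
    with X show ?thesis by blast
  next
    case (2 P Q)
    with assms(1) X have "Pi P \<or> Pi Q" by blast
    with 2 show ?thesis by (auto simp: lookup_add)
  next
    case (3 W)
    with assms(2) X show ?thesis by auto
  qed
qed

lemma reactant_closed_move: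
  assumes "reactant_closed N L Pi" "admissible_move N L g X r" "\<exists>Y. Pi Y \<and> 1 \<le> g Y"
  shows "\<exists>Y. Pi Y \<and> 1 \<le> move L g X r Y"
proof -
  from assms(3) obtain Y where Y: "Pi Y" "1 \<le> g Y" by blast
  show ?thesis
  proof (cases "Y = X")
    case True
    with assms(1,2) Y obtain T where "Pi T" "1 \<le> Poly_Mapping.lookup (reactant L r) T"
      unfolding reactant_closed_def by blast
    moreover have "Poly_Mapping.lookup (reactant L r) T \<le> move L g X r T"
      using assms(2) reactant_le_move by (auto simp: admissible_move_def le_fun_def)
    ultimately show ?thesis by force
  next
    case False
    with Y show ?thesis using move_ge[OF False, of g L r] by force
  qed
qed

lemma reactant_not_le_cpx1:
  assumes "\<not> intermediate Y"
  shows "\<not> Poly_Mapping.lookup (reactant L r) \<le> Poly_Mapping.lookup (cpx1 Y)"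
proof
  assume le: "Poly_Mapping.lookup (reactant L r) \<le> Poly_Mapping.lookup (cpx1 Y)"
  have pair: False if "Poly_Mapping.lookup (cpx1 P + cpx1 Q) \<le> Poly_Mapping.lookup (cpx1 Y)" for P Q
    using that by (auto simp: lookup_cpx1_add_cpx1_le_iff split: if_splits)
  have single: "Poly_Mapping.lookup (cpx1 W) \<le> Poly_Mapping.lookup (cpx1 Y) \<longleftrightarrow> W = Y" for W
    using le_funD[of "Poly_Mapping.lookup (cpx1 W)" _ W] by (auto simp: le_fun_def)
  show False
    by (cases r) (use le pair assms in \<open>auto simp: cpx2_eq_add single\<close>)
qed

lemma lookup_funpow_tder_cpx1_eq_zero:
  assumes "1 \<le> l" "\<not> intermediate Y"
  shows "Poly_Mapping.lookup ((tder N L ^^ l) p) (cpx1 Y) = 0"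
proof (rule ccontr)
  assume "Poly_Mapping.lookup ((tder N L ^^ l) p) (cpx1 Y) \<noteq> 0"
  moreover obtain l' where "l = Suc l'" using assms(1) by (cases l) auto
  ultimately have "cpx1 Y \<in> Poly_Mapping.keys (tder N L ((tder N L ^^ l') p))"
    by (simp add: in_keys_iff)
  then obtain m' X r where "admissible_move N L (Poly_Mapping.lookup m') X r"
    "Poly_Mapping.lookup (cpx1 Y) = move L (Poly_Mapping.lookup m') X r"
    by (rule keys_tder_move)
  then have "Poly_Mapping.lookup (reactant L r) \<le> Poly_Mapping.lookup (cpx1 Y)"
    using reactant_le_move by (simp add: admissible_move_def)
  with reactant_not_le_cpx1[OF assms(2)] show False by blast
qed

section \<open>Monomials that cannot lead to the target\<close>

locale cascade =
  fixes N :: nat and L :: "nat \<Rightarrow> nat" and n :: nat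
  assumes two_le_n: "2 \<le> n" and n_le_N: "n \<le> N"
    and L_pos: "\<And>m. 1 \<le> m \<Longrightarrow> m \<le> N \<Longrightarrow> 1 \<le> L m"
begin

abbreviation "Sa \<equiv> S (n - 1) (L (n - 1))"
abbreviation "Sx \<equiv> S n (L n)"
abbreviation "Sw \<equiv> S n (L n - 1)"
abbreviation "Ux \<equiv> U n (L n)"

abbreviation "ka \<equiv> rconst (Ra n (L n))"
abbreviation "kb \<equiv> rconst (Rb n (L n))"
abbreviation "kc \<equiv> rconst (Rc n (L n))"

lemma L_n_pos: "1 \<le> L n"
  using L_pos[of n] two_le_n n_le_N by simp

lemma in_species_set [simp]:
  "Sx \<in> species_set N L" "Sw \<in> species_set N L" "Ux \<in> species_set N L"
  using two_le_n n_le_N L_n_pos by (auto simp: species_set_def)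

lemma rates_n [simp]: "Ra n (L n) \<in> rates N L" "Rb n (L n) \<in> rates N L" "Rc n (L n) \<in> rates N L"
  using two_le_n n_le_N L_n_pos by (auto simp: mem_rates_iff)

lemma Sprev_n: "Sprev L n = Sa"
  using two_le_n by (simp add: Sprev_def)

definition downstream :: "species \<Rightarrow> bool" where
  "downstream Y \<longleftrightarrow> n \<le> layer Y"

definition dead :: "species \<Rightarrow> bool" where
  "dead Y \<longleftrightarrow> n + 1 \<le> layer Y \<or> Y = F n \<or> (\<exists>j. Y = V n j)"

definition stray :: "species \<Rightarrow> bool" where
  "stray Y \<longleftrightarrow> (\<exists>j. Y = U n j) \<or> (\<exists>j. Y = S n j \<and> j \<noteq> L n - 1)"

definition active :: "complex \<Rightarrow> bool" where
  "active c \<longleftrightarrow> c = cpx1 Sa \<or> (\<exists>Z. intermediate Z \<and> layer Z < n \<and> c = cpx1 Z) \<or>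
     (\<exists>P Q W. associates N L P Q W \<and> layer W < n \<and> c = cpx1 P + cpx1 Q)"

definition has_downstream :: "(species \<Rightarrow> nat) \<Rightarrow> bool" where
  "has_downstream g \<longleftrightarrow> (\<exists>Y. downstream Y \<and> 1 \<le> g Y)"

definition two_downstream :: "(species \<Rightarrow> nat) \<Rightarrow> bool" where
  "two_downstream g \<longleftrightarrow>
     (\<exists>Y1 Y2. downstream Y1 \<and> downstream Y2 \<and> Poly_Mapping.lookup (cpx1 Y1 + cpx1 Y2) \<le> g)"

definition has_dead :: "(species \<Rightarrow> nat) \<Rightarrow> bool" where
  "has_dead g \<longleftrightarrow> (\<exists>Y. dead Y \<and> 1 \<le> g Y)"

definition has_stray :: "(species \<Rightarrow> nat) \<Rightarrow> bool" where
  "has_stray g \<longleftrightarrow> (\<exists>Y. stray Y \<and> 1 \<le> g Y)"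

definition has_active :: "(species \<Rightarrow> nat) \<Rightarrow> bool" where
  "has_active g \<longleftrightarrow> (\<exists>c. active c \<and> Poly_Mapping.lookup c \<le> g)"

definition two_active :: "(species \<Rightarrow> nat) \<Rightarrow> bool" where
  "two_active g \<longleftrightarrow> (\<exists>c d. active c \<and> active d \<and> Poly_Mapping.lookup (c + d) \<le> g)"

text \<open>The monomials neglected by the recurrence below. The set is closed under moves because
  downstream and dead factors are never lost, a stray factor is replaced by a stray or a dead one
  or by Sa together with a downstream one, and an active complex is replaced by an active one
  unless the move creates a new downstream factor.\<close>

definition hopeless :: "(species \<Rightarrow> nat) \<Rightarrow> bool" where
  "hopeless g \<longleftrightarrow> two_downstream g \<or> has_dead g \<or> (has_stray g \<and> has_active g) \<or>
     (has_downstream g \<and> two_active g)"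

lemma reactant_closed_downstream: "reactant_closed N L downstream"
proof (rule reactant_closedI)
  fix P Q W assume "associates N L P Q W" "downstream W"
  then show "downstream P \<or> downstream Q"
    using associates_layer(4) by (simp add: downstream_def)
next
  fix W X assume "dissociates N L W X" "downstream X"
  then show "downstream W"
    using dissociates_layer(3) unfolding downstream_def by (meson order_trans)
qed

lemma reactant_closed_dead: "reactant_closed N L dead"
proof (rule reactant_closedI)
  fix P Q W assume "associates N L P Q W" "dead W"
  then show "dead P \<or> dead Q"
    by (auto simp: associates_def dead_def)
next
  fix W X assume "dissociates N L W X" "dead X"
  then show "dead W"
    by (auto simp: dissociates_def dead_def Sprev_def split: if_splits)
qed

lemma has_downstream_move:
  "admissible_move N L g X r \<Longrightarrow> has_downstream g \<Longrightarrow> has_downstream (move L g X r)"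
  unfolding has_downstream_def using reactant_closed_move[OF reactant_closed_downstream] by blast

lemma has_dead_move:
  "admissible_move N L g X r \<Longrightarrow> has_dead g \<Longrightarrow> has_dead (move L g X r)"
  unfolding has_dead_def using reactant_closed_move[OF reactant_closed_dead] by blast

lemma has_downstream_of_reactant:
  assumes "admissible_move N L g X r" "downstream W" "1 \<le> Poly_Mapping.lookup (reactant L r) W"
  shows "has_downstream (move L g X r)"
proof -
  have "Poly_Mapping.lookup (reactant L r) W \<le> move L g X r W"
    using assms(1) reactant_le_move by (simp add: admissible_move_def le_fun_def)
  with assms(2,3) show ?thesis
    unfolding has_downstream_def by (intro exI[of _ W]) simp
qed

lemma two_downstream_move:
  assumes mv: "admissible_move N L g X r" and "two_downstream g"
  shows "two_downstream (move L g X r)"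
proof -
  from assms(2) obtain Y1 Y2 where Y: "downstream Y1" "downstream Y2"
    "Poly_Mapping.lookup (cpx1 Y1 + cpx1 Y2) \<le> g"
    unfolding two_downstream_def by blast
  show ?thesis
  proof (cases "Poly_Mapping.lookup (cpx1 Y1 + cpx1 Y2) X + 1 \<le> g X")
    case True
    then show ?thesis using Y lookup_le_move_keep unfolding two_downstream_def by blast
  next
    case False
    with mv have "X = Y1 \<or> X = Y2"
      by (auto simp: admissible_move_def lookup_add split: if_splits)
    with Y obtain Y' where Y': "downstream X" "downstream Y'"
      "Poly_Mapping.lookup (cpx1 X + cpx1 Y') \<le> g"
      by (metis add.commute)
    obtain T where T: "downstream T" "1 \<le> Poly_Mapping.lookup (reactant L r) T"
      using reactant_closed_downstream mv Y'(1) unfolding reactant_closed_def by blast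
    then have "Poly_Mapping.lookup (cpx1 T) \<le> Poly_Mapping.lookup (reactant L r)"
      by (auto simp: le_fun_def)
    then have "Poly_Mapping.lookup (cpx1 T + cpx1 Y') \<le> move L g X r"
      using lookup_le_move_replace[OF Y'(3)] by simp
    with T(1) Y'(2) show ?thesis unfolding two_downstream_def by blast
  qed
qed

lemma two_downstream_of_reactant:
  assumes "admissible_move N L g X r" "has_downstream g"
    and "downstream W" "W \<noteq> X" "\<not> downstream X" "1 \<le> Poly_Mapping.lookup (reactant L r) W"
  shows "two_downstream (move L g X r)"
proof -
  from assms(2) obtain Y where Y: "downstream Y" "1 \<le> g Y"
    unfolding has_downstream_def by blast
  with assms(5) have "Y \<noteq> X" by blast
  then have "1 \<le> move L g X r Y"
    using move_ge[of Y X g L r] Y(2) by simp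
  moreover have "g W + Poly_Mapping.lookup (reactant L r) W \<le> move L g X r W"
    using assms(4) by (simp add: move_def)
  ultimately have "Poly_Mapping.lookup (cpx1 Y + cpx1 W) \<le> move L g X r"
    using Y(2) assms(6) by (auto simp: lookup_cpx1_add_cpx1_le_iff)
  with Y(1) assms(3) show ?thesis unfolding two_downstream_def by blast
qed

lemma active_layer: "active c \<Longrightarrow> 1 \<le> Poly_Mapping.lookup c Y \<Longrightarrow> layer Y < n"
  using two_le_n associates_layer
  by (fastforce simp: active_def lookup_add split: if_splits)

lemma active_intermediate:
  "active c \<Longrightarrow> 1 \<le> Poly_Mapping.lookup c Y \<Longrightarrow> intermediate Y \<Longrightarrow> c = cpx1 Y \<and> layer Y < n"
  using associates_layer
  by (fastforce simp: active_def lookup_add split: if_splits)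

lemma active_move:
  assumes c: "active c" "1 \<le> Poly_Mapping.lookup c X" and mv: "admissible_move N L g X r"
    and X: "Poly_Mapping.lookup (reactant L r) X = 0"
  shows "(\<exists>c'. active c' \<and> Poly_Mapping.lookup c' \<le> Poly_Mapping.lookup (reactant L r)) \<or>
    (\<exists>W. downstream W \<and> W \<noteq> X \<and> \<not> downstream X \<and> 1 \<le> Poly_Mapping.lookup (reactant L r) W)"
proof -
  have X_up: "\<not> downstream X" using active_layer[OF c] by (simp add: downstream_def)
  show ?thesis
  proof (cases rule: admissible_move_cases[OF mv])
    case 1
    with X show ?thesis by simp
  next
    case (2 P Q)
    then have "layer X < n"
      using active_intermediate[OF c] associates_layer(1) by blast
    with 2 have "active (reactant L r)" by (auto simp: active_def)
    then show ?thesis by auto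
  next
    case (3 W)
    show ?thesis
    proof (cases "downstream W")
      case True
      with X_up 3 show ?thesis by auto
    next
      case False
      with 3 have "active (reactant L r)" by (auto simp: active_def downstream_def)
      then show ?thesis by auto
    qed
  qed
qed

lemma has_active_move:
  assumes mv: "admissible_move N L g X r" and "has_active g"
  shows "has_active (move L g X r) \<or>
    (\<exists>W. downstream W \<and> W \<noteq> X \<and> \<not> downstream X \<and> 1 \<le> Poly_Mapping.lookup (reactant L r) W)"
proof -
  from assms(2) obtain c where c: "active c" "Poly_Mapping.lookup c \<le> g"
    unfolding has_active_def by blast
  consider "Poly_Mapping.lookup c X + 1 \<le> g X" | "1 \<le> Poly_Mapping.lookup (reactant L r) X"
    | "1 \<le> Poly_Mapping.lookup c X" "Poly_Mapping.lookup (reactant L r) X = 0"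
    using mv by (fastforce simp: admissible_move_def)
  then show ?thesis
  proof cases
    case 1
    then show ?thesis using c lookup_le_move_keep unfolding has_active_def by blast
  next
    case 2
    then have "g \<le> move L g X r" using mv le_move_if_reactant by (simp add: admissible_move_def)
    then show ?thesis using c unfolding has_active_def by (blast intro: order_trans)
  next
    case 3
    from active_move[OF c(1) 3(1) mv 3(2)] show ?thesis
    proof (elim disjE exE conjE)
      fix c' assume "active c'" "Poly_Mapping.lookup c' \<le> Poly_Mapping.lookup (reactant L r)"
      moreover have "Poly_Mapping.lookup (reactant L r) \<le> move L g X r"
        using mv reactant_le_move by (simp add: admissible_move_def)
      ultimately show ?thesis unfolding has_active_def by (blast intro: order_trans)
    qed blast
  qed
qed

lemma two_active_move:
  assumes mv: "admissible_move N L g X r" and "has_downstream g" and "two_active g"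
  shows "two_active (move L g X r) \<or> two_downstream (move L g X r)"
proof -
  from assms(3) obtain c d where cd: "active c" "active d" "Poly_Mapping.lookup (c + d) \<le> g"
    unfolding two_active_def by blast
  consider "Poly_Mapping.lookup (c + d) X + 1 \<le> g X" | "1 \<le> Poly_Mapping.lookup (reactant L r) X"
    | "1 \<le> Poly_Mapping.lookup (c + d) X" "Poly_Mapping.lookup (reactant L r) X = 0"
    using mv by (fastforce simp: admissible_move_def)
  then show ?thesis
  proof cases
    case 1
    then show ?thesis using cd lookup_le_move_keep unfolding two_active_def by blast
  next
    case 2
    then have "g \<le> move L g X r" using mv le_move_if_reactant by (simp add: admissible_move_def)
    then show ?thesis using cd unfolding two_active_def by (blast intro: order_trans)
  next
    case 3
    then have "1 \<le> Poly_Mapping.lookup c X \<or> 1 \<le> Poly_Mapping.lookup d X"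
      by (auto simp: lookup_add)
    then obtain c1 c2 where c12: "active c1" "active c2" "Poly_Mapping.lookup (c1 + c2) \<le> g"
      "1 \<le> Poly_Mapping.lookup c1 X"
      using cd by (metis add.commute)
    from active_move[OF c12(1) c12(4) mv 3(2)] show ?thesis
    proof (elim disjE exE conjE)
      fix c' assume "active c'" "Poly_Mapping.lookup c' \<le> Poly_Mapping.lookup (reactant L r)"
      then have "Poly_Mapping.lookup (c' + c2) \<le> move L g X r"
        using lookup_le_move_replace[OF c12(3,4)] by blast
      with \<open>active c'\<close> c12(2) show ?thesis unfolding two_active_def by blast
    qed (use two_downstream_of_reactant[OF mv assms(2)] in blast)
  qed
qed

lemma stray_downstream: "stray Y \<Longrightarrow> downstream Y"
  by (auto simp: stray_def downstream_def)

lemma hopeless_move_stray_factor: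
  assumes mv: "admissible_move N L g X r" and X: "stray X"
    and c: "active c" "Poly_Mapping.lookup c \<le> g"
  shows "hopeless (move L g X r)"
proof -
  have "\<not> 1 \<le> Poly_Mapping.lookup c X"
    using active_layer[OF c(1), of X] stray_downstream[OF X] by (auto simp: downstream_def)
  then have cX: "Poly_Mapping.lookup c X = 0" by simp
  with mv have "Poly_Mapping.lookup c \<le> move L g X r"
    using lookup_le_move_keep[OF c(2)] by (simp add: admissible_move_def)
  then have active: "has_active (move L g X r)"
    using c(1) unfolding has_active_def by blast
  show ?thesis
  proof (cases rule: admissible_move_cases[OF mv])
    case 1
    with mv have "g \<le> move L g X r" by (simp add: le_move_if_reactant admissible_move_def)
    with mv have "1 \<le> move L g X r X"
      using le_funD order_trans unfolding admissible_move_def by metis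
    with X active show ?thesis unfolding hopeless_def has_stray_def by blast
  next
    case (2 P Q)
    with X obtain j where "X = U n j"
      using associates_layer(1) by (fastforce simp: stray_def)
    with 2 have PQ: "P = Sa" "Q = S n (j - 1)"
      using Sprev_n by (auto simp: associates_def)
    then have "has_downstream (move L g X r)"
      using has_downstream_of_reactant[OF mv, of Q] 2(2) by (simp add: downstream_def lookup_add)
    moreover have "Poly_Mapping.lookup (cpx1 X + c) \<le> g"
      using c(2) cX mv by (auto simp: le_fun_def lookup_add admissible_move_def)
    then have "Poly_Mapping.lookup (cpx1 Sa + c) \<le> move L g X r"
      using lookup_le_move_replace[of "cpx1 X" c g X "cpx1 Sa" L r] 2(2) PQ
      by (simp add: le_fun_def lookup_add)
    then have "two_active (move L g X r)"
      using c(1) unfolding two_active_def active_def by blast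
    ultimately show ?thesis unfolding hopeless_def by blast
  next
    case (3 W)
    with X obtain j where "X = S n j"
      using dissociates_layer(2) by (fastforce simp: stray_def)
    with 3 have "stray W \<or> dead W"
      by (auto simp: dissociates_def stray_def dead_def Sprev_def split: if_splits)
    moreover have "1 \<le> move L g X r W"
      using mv 3(3) by (simp add: move_def admissible_move_def)
    ultimately show ?thesis
      using active unfolding hopeless_def has_stray_def has_dead_def by blast
  qed
qed

lemma hopeless_move_stray:
  assumes mv: "admissible_move N L g X r" and "has_stray g" "has_active g"
  shows "hopeless (move L g X r)"
proof -
  from assms(2,3) obtain Y c where Y: "stray Y" "1 \<le> g Y" and c: "active c" "Poly_Mapping.lookup c \<le> g"
    unfolding has_stray_def has_active_def by blast
  show ?thesis
  proof (cases "Y = X")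
    case True
    with hopeless_move_stray_factor[OF mv _ c] Y show ?thesis by simp
  next
    case False
    then have "has_stray (move L g X r)"
      using move_ge[OF False, of g L r] Y unfolding has_stray_def by force
    moreover have "has_downstream g"
      using Y stray_downstream unfolding has_downstream_def by blast
    ultimately show ?thesis
      using has_active_move[OF mv assms(3)] two_downstream_of_reactant[OF mv]
      unfolding hopeless_def by blast
  qed
qed

lemma move_closed_hopeless: "move_closed N L hopeless"
  unfolding move_closed_def hopeless_def
  using two_downstream_move has_dead_move hopeless_move_stray two_active_move has_downstream_move
  unfolding hopeless_def by blast

lemma move_closed_downstream_or_active:
  "move_closed N L (\<lambda>g. has_downstream g \<or> has_active g)"
  unfolding move_closed_def
  using has_downstream_move has_active_move has_downstream_of_reactant by blast

end

context cascade
begin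

lemma hopeless_add_dead:
  "dead W \<Longrightarrow> 1 \<le> Poly_Mapping.lookup c W \<Longrightarrow> hopeless (Poly_Mapping.lookup (c + m))"
  unfolding hopeless_def has_dead_def by (auto simp: lookup_add intro: le_add1 order_trans)

lemma two_downstream_add:
  assumes "downstream W" "1 \<le> Poly_Mapping.lookup c W" "has_downstream (Poly_Mapping.lookup m)"
  shows "two_downstream (Poly_Mapping.lookup (c + m))"
proof -
  from assms(3) obtain Y where "downstream Y" "1 \<le> Poly_Mapping.lookup m Y"
    unfolding has_downstream_def by blast
  with assms(1,2) show ?thesis
    unfolding two_downstream_def
    by (intro exI[of _ Y] exI[of _ W]) (auto simp: lookup_cpx1_add_cpx1_le_iff lookup_add)
qed

lemma has_active_add:
  "has_active (Poly_Mapping.lookup m) \<Longrightarrow> has_active (Poly_Mapping.lookup (c + m))"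
  unfolding has_active_def by (auto simp: le_fun_def lookup_add intro: trans_le_add2)

lemma hopeless_add_stray:
  assumes "stray W" "1 \<le> Poly_Mapping.lookup c W"
    and "has_downstream (Poly_Mapping.lookup m) \<or> has_active (Poly_Mapping.lookup m)"
  shows "hopeless (Poly_Mapping.lookup (c + m))"
proof -
  have "has_stray (Poly_Mapping.lookup (c + m))"
    using assms(1,2) unfolding has_stray_def by (auto simp: lookup_add intro: trans_le_add1)
  with assms(3) two_downstream_add[OF stray_downstream[OF assms(1)] assms(2)] has_active_add
  show ?thesis unfolding hopeless_def by blast
qed

lemma hopeless_add_Sa_Sw:
  assumes "has_downstream (Poly_Mapping.lookup m) \<or> has_active (Poly_Mapping.lookup m)"
  shows "hopeless (Poly_Mapping.lookup (cpx1 Sa + cpx1 Sw + m))"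
  using assms
proof
  assume "has_downstream (Poly_Mapping.lookup m)"
  then show ?thesis
    using two_downstream_add[of Sw "cpx1 Sa + cpx1 Sw"] unfolding hopeless_def
    by (simp add: downstream_def lookup_add)
next
  assume "has_active (Poly_Mapping.lookup m)"
  then obtain c where c: "active c" "Poly_Mapping.lookup c \<le> Poly_Mapping.lookup m"
    unfolding has_active_def by blast
  have "Poly_Mapping.lookup (cpx1 Sa + c) \<le> Poly_Mapping.lookup (cpx1 Sa + cpx1 Sw + m)"
  proof (rule le_funI)
    fix Y
    show "Poly_Mapping.lookup (cpx1 Sa + c) Y \<le> Poly_Mapping.lookup (cpx1 Sa + cpx1 Sw + m) Y"
      using le_funD[OF c(2), of Y] by (simp add: lookup_add)
  qed
  moreover have "active (cpx1 Sa)" by (simp add: active_def)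
  ultimately have "two_active (Poly_Mapping.lookup (cpx1 Sa + cpx1 Sw + m))"
    using c(1) unfolding two_active_def by blast
  moreover have "has_downstream (Poly_Mapping.lookup (cpx1 Sa + cpx1 Sw + m))"
    unfolding has_downstream_def by (intro exI[of _ Sw]) (simp add: downstream_def lookup_add)
  ultimately show ?thesis unfolding hopeless_def by blast
qed

lemma hopeless_reactant_changing_Sw:
  assumes r: "r \<in> rates N L"
    and changes: "Poly_Mapping.lookup (reaction_product L r) Sw \<noteq> Poly_Mapping.lookup (reactant L r) Sw"
    and m: "has_downstream (Poly_Mapping.lookup m) \<or> has_active (Poly_Mapping.lookup m)"
  shows "hopeless (Poly_Mapping.lookup (reactant L r + m))"
proof (cases r)
  case (Ra k j)
  with r changes have "k = n" "j = L n"
    using L_n_pos by (auto simp: mem_rates_iff Sprev_eq_S_iff cpx2_eq_add lookup_add split: if_splits)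
  then show ?thesis
    using Ra hopeless_add_Sa_Sw[OF m] Sprev_n by (simp add: cpx2_eq_add add.commute)
next
  case (Rb k j)
  with r changes have "k = n"
    using L_n_pos by (auto simp: mem_rates_iff Sprev_eq_S_iff cpx2_eq_add lookup_add split: if_splits)
  with Rb m show ?thesis by (intro hopeless_add_stray[of "U n j"]) (auto simp: stray_def)
next
  case (Rc k j)
  with r changes have "k = n"
    using L_n_pos by (auto simp: mem_rates_iff Sprev_eq_S_iff cpx2_eq_add lookup_add split: if_splits)
  with Rc m show ?thesis by (intro hopeless_add_stray[of "U n j"]) (auto simp: stray_def)
next
  case (Rat k j)
  with changes have "k = n" by (auto simp: cpx2_eq_add lookup_add split: if_splits)
  with Rat show ?thesis by (intro hopeless_add_dead[of "F n"]) (auto simp: dead_def cpx2_eq_add lookup_add)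
next
  case (Rbt k j)
  with changes have "k = n" by (auto simp: cpx2_eq_add lookup_add split: if_splits)
  with Rbt show ?thesis by (intro hopeless_add_dead[of "V n j"]) (auto simp: dead_def)
next
  case (Rct k j)
  with changes have "k = n" by (auto simp: cpx2_eq_add lookup_add split: if_splits)
  with Rct show ?thesis by (intro hopeless_add_dead[of "V n j"]) (auto simp: dead_def)
qed

lemma has_dead_reactant_changing_Sx:
  assumes r: "r \<in> rates N L" "r \<noteq> Rc n (L n)"
    and changes: "Poly_Mapping.lookup (reaction_product L r) Sx \<noteq> Poly_Mapping.lookup (reactant L r) Sx"
  shows "has_dead (Poly_Mapping.lookup (reactant L r))"
  unfolding has_dead_def
proof (cases r)
  case (Ra k j)
  with r changes have "k = n + 1"
    by (auto simp: mem_rates_iff Sprev_eq_S_iff cpx2_eq_add lookup_add split: if_splits)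
  with Ra show "\<exists>Y. dead Y \<and> 1 \<le> Poly_Mapping.lookup (reactant L r) Y"
    by (intro exI[of _ "S k (j - 1)"]) (auto simp: dead_def cpx2_eq_add lookup_add)
next
  case (Rb k j)
  with r changes have "k = n + 1"
    by (auto simp: mem_rates_iff Sprev_eq_S_iff cpx2_eq_add lookup_add split: if_splits)
  with Rb show "\<exists>Y. dead Y \<and> 1 \<le> Poly_Mapping.lookup (reactant L r) Y"
    by (intro exI[of _ "U k j"]) (auto simp: dead_def)
next
  case (Rc k j)
  with r changes have "k = n + 1"
    by (auto simp: mem_rates_iff Sprev_eq_S_iff cpx2_eq_add lookup_add split: if_splits)
  with Rc show "\<exists>Y. dead Y \<and> 1 \<le> Poly_Mapping.lookup (reactant L r) Y"
    by (intro exI[of _ "U k j"]) (auto simp: dead_def)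
next
  case (Rat k j)
  with changes have "k = n" by (auto simp: cpx2_eq_add lookup_add split: if_splits)
  with Rat show "\<exists>Y. dead Y \<and> 1 \<le> Poly_Mapping.lookup (reactant L r) Y"
    by (intro exI[of _ "F n"]) (auto simp: dead_def cpx2_eq_add lookup_add)
next
  case (Rbt k j)
  with changes have "k = n" by (auto simp: cpx2_eq_add lookup_add split: if_splits)
  with Rbt show "\<exists>Y. dead Y \<and> 1 \<le> Poly_Mapping.lookup (reactant L r) Y"
    by (intro exI[of _ "V n j"]) (auto simp: dead_def)
next
  case (Rct k j)
  with changes have "k = n" by (auto simp: cpx2_eq_add lookup_add split: if_splits)
  with Rct show "\<exists>Y. dead Y \<and> 1 \<le> Poly_Mapping.lookup (reactant L r) Y"
    by (intro exI[of _ "V n j"]) (auto simp: dead_def)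
qed

lemma keys_rhs_Sw_mult:
  assumes "\<forall>m\<in>Poly_Mapping.keys p. has_downstream (Poly_Mapping.lookup m) \<or> has_active (Poly_Mapping.lookup m)"
  shows "\<forall>m\<in>Poly_Mapping.keys (rhs N L Sw * p). hopeless (Poly_Mapping.lookup m)"
proof
  fix m assume "m \<in> Poly_Mapping.keys (rhs N L Sw * p)"
  then obtain a b where ab: "m = a + b" "a \<in> Poly_Mapping.keys (rhs N L Sw)" "b \<in> Poly_Mapping.keys p"
    using keys_mult by blast
  from ab(2) obtain r where "r \<in> rates N L" "a = reactant L r"
    "Poly_Mapping.lookup (reaction_product L r) Sw \<noteq> Poly_Mapping.lookup (reactant L r) Sw"
    by (rule keys_rhs)
  with ab(1,3) assms show "hopeless (Poly_Mapping.lookup m)"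
    using hopeless_reactant_changing_Sw by blast
qed

lemma tder_cvar_Ux:
  "tder N L (cvar Ux) = Poly_Mapping.single 0 ka * (cvar Sw * cvar Sa)
     + Poly_Mapping.single 0 (- (kb + kc)) * cvar Ux"
proof -
  let ?f = "\<lambda>r. Poly_Mapping.single (reactant L r) (rconst r * net_change L r Ux)"
  let ?R = "{Ra n (L n), Rb n (L n), Rc n (L n)}"
  have "?f r = 0" if "r \<notin> ?R" for r
    using that by (simp add: net_change_def lookup_reactant_U lookup_reaction_product_U)
  then have "rhs N L Ux = sum ?f ?R"
    unfolding rhs_eq_sum_rates by (intro sum.mono_neutral_right[OF finite_rates]) auto
  also have "\<dots> = Poly_Mapping.single (cpx1 Sa + cpx1 Sw) ka
      + Poly_Mapping.single (cpx1 Ux) (- kb) + Poly_Mapping.single (cpx1 Ux) (- kc)"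
    using Sprev_n by (simp add: net_change_def cpx2_eq_add lookup_add)
  also have "\<dots> = Poly_Mapping.single 0 ka * (cvar Sw * cvar Sa)
     + Poly_Mapping.single 0 (- (kb + kc)) * cvar Ux"
    by (simp add: cvar_eq_single_cpx1 mult_single single_diff single_uminus algebra_simps)
  finally show ?thesis by (simp add: tder_cvar)
qed

lemma tder_cvar_Sx:
  obtains R where "tder N L (cvar Sx) = Poly_Mapping.single 0 kc * cvar Ux + R"
    "\<forall>m\<in>Poly_Mapping.keys R. hopeless (Poly_Mapping.lookup m)"
proof -
  let ?f = "\<lambda>r. Poly_Mapping.single (reactant L r) (rconst r * net_change L r Sx)"
  let ?R = "\<Sum>r\<in>rates N L - {Rc n (L n)}. ?f r"
  have "net_change L (Rc n (L n)) Sx = 1"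
    using two_le_n by (simp add: net_change_def Sprev_n cpx2_eq_add lookup_add)
  then have "?f (Rc n (L n)) = Poly_Mapping.single 0 kc * cvar Ux"
    by (simp add: cvar_eq_single_cpx1 mult_single)
  then have "tder N L (cvar Sx) = Poly_Mapping.single 0 kc * cvar Ux + ?R"
    unfolding tder_cvar[OF in_species_set(1)] rhs_eq_sum_rates
    by (simp add: sum.remove[OF finite_rates rates_n(3)])
  moreover have "hopeless (Poly_Mapping.lookup m)" if "m \<in> Poly_Mapping.keys ?R" for m
  proof -
    have "m \<in> (\<Union>r\<in>rates N L - {Rc n (L n)}. Poly_Mapping.keys (?f r))"
      using that by (rule subsetD[OF keys_sum])
    then obtain r where r: "r \<in> rates N L" "r \<noteq> Rc n (L n)" "m \<in> Poly_Mapping.keys (?f r)"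
      by blast
    then have "m = reactant L r"
      "Poly_Mapping.lookup (reaction_product L r) Sx \<noteq> Poly_Mapping.lookup (reactant L r) Sx"
      by (auto simp: net_change_def split: if_splits)
    with r show ?thesis using has_dead_reactant_changing_Sx unfolding hopeless_def by blast
  qed
  ultimately show ?thesis using that by blast
qed

end

section \<open>The recurrence for the coefficient of the target\<close>

locale cascade_target = cascade +
  fixes M :: complex
  assumes target_not_hopeless: "\<not> hopeless (Poly_Mapping.lookup (cpx1 Sw + M))"
begin

text \<open>The terms in which the factor Sw itself is differentiated are hopeless, so it behaves
  like a constant factor.\<close>

lemma lookup_funpow_tder_cvar_Sw_mult:
  assumes "\<forall>m\<in>Poly_Mapping.keys p. has_downstream (Poly_Mapping.lookup m) \<or> has_active (Poly_Mapping.lookup m)"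
  shows "Poly_Mapping.lookup ((tder N L ^^ k) (cvar Sw * p)) (cpx1 Sw + M)
    = Poly_Mapping.lookup ((tder N L ^^ k) p) M"
  using assms
proof (induction k arbitrary: p)
  case 0
  then show ?case by (simp add: cvar_eq_single_cpx1 lookup_single_mult_add)
next
  case (Suc k)
  have "(tder N L ^^ Suc k) (cvar Sw * p) = (tder N L ^^ k) (tder N L (cvar Sw * p))"
    by (simp only: funpow_Suc_right comp_def)
  also have "tder N L (cvar Sw * p) = rhs N L Sw * p + cvar Sw * tder N L p"
    by (rule tder_cvar_mult[OF in_species_set(2)])
  finally have "(tder N L ^^ Suc k) (cvar Sw * p)
      = (tder N L ^^ k) (rhs N L Sw * p) + (tder N L ^^ k) (cvar Sw * tder N L p)"
    by (simp only: funpow_tder_add)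
  moreover have "Poly_Mapping.lookup ((tder N L ^^ k) (rhs N L Sw * p)) (cpx1 Sw + M) = 0"
    using lookup_funpow_tder_eq_zero[OF move_closed_hopeless keys_rhs_Sw_mult[OF Suc.prems]
        target_not_hopeless] .
  moreover have "\<forall>m\<in>Poly_Mapping.keys (tder N L p).
      has_downstream (Poly_Mapping.lookup m) \<or> has_active (Poly_Mapping.lookup m)"
    using keys_funpow_tder_closed[OF move_closed_downstream_or_active Suc.prems, of 1] by simp
  ultimately show ?case
    by (simp only: lookup_add Suc.IH funpow_Suc_right comp_def) simp
qed

lemma lookup_funpow_tder_Ux_Suc:
  "Poly_Mapping.lookup ((tder N L ^^ Suc k) (cvar Ux)) (cpx1 Sw + M)
    = ka * Poly_Mapping.lookup ((tder N L ^^ k) (cvar Sa)) M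
      - (kb + kc) * Poly_Mapping.lookup ((tder N L ^^ k) (cvar Ux)) (cpx1 Sw + M)"
proof -
  have "\<forall>m\<in>Poly_Mapping.keys (cvar Sa). has_downstream (Poly_Mapping.lookup m) \<or> has_active (Poly_Mapping.lookup m)"
    unfolding has_active_def active_def by (auto simp: cvar_eq_single_cpx1)
  then show ?thesis
    unfolding funpow_Suc_right comp_def tder_cvar_Ux funpow_tder_add funpow_tder_scale lookup_add
      lookup_scale_mult
    by (simp only: lookup_funpow_tder_cvar_Sw_mult) (simp add: algebra_simps)
qed

lemma lookup_funpow_tder_Sx_Suc:
  "Poly_Mapping.lookup ((tder N L ^^ Suc k) (cvar Sx)) (cpx1 Sw + M)
    = kc * Poly_Mapping.lookup ((tder N L ^^ k) (cvar Ux)) (cpx1 Sw + M)"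
proof -
  obtain R where R: "tder N L (cvar Sx) = Poly_Mapping.single 0 kc * cvar Ux + R"
    "\<forall>m\<in>Poly_Mapping.keys R. hopeless (Poly_Mapping.lookup m)"
    by (rule tder_cvar_Sx)
  have "Poly_Mapping.lookup ((tder N L ^^ k) R) (cpx1 Sw + M) = 0"
    using lookup_funpow_tder_eq_zero[OF move_closed_hopeless R(2) target_not_hopeless] .
  then show ?thesis
    unfolding funpow_Suc_right comp_def R(1) funpow_tder_add funpow_tder_scale lookup_add
      lookup_scale_mult
    by simp
qed

lemma lookup_cvar_target:
  assumes "Y \<noteq> Sw"
  shows "Poly_Mapping.lookup (cvar Y) (cpx1 Sw + M) = 0"
proof -
  have "cpx1 Y \<noteq> cpx1 Sw + M"
  proof
    assume "cpx1 Y = cpx1 Sw + M"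
    then have "Poly_Mapping.lookup (cpx1 Y) Sw = Poly_Mapping.lookup (cpx1 Sw + M) Sw" by simp
    with assms show False by (simp add: lookup_add)
  qed
  then show ?thesis by (simp add: cvar_eq_single_cpx1 lookup_single)
qed

lemma lookup_funpow_tder_Ux_eq_zero:
  assumes "\<forall>l<l0. Poly_Mapping.lookup ((tder N L ^^ l) (cvar Sa)) M = 0" "k \<le> l0"
  shows "Poly_Mapping.lookup ((tder N L ^^ k) (cvar Ux)) (cpx1 Sw + M) = 0"
  using assms(2)
proof (induction k)
  case 0
  show ?case by (simp only: funpow_0) (rule lookup_cvar_target, simp)
next
  case (Suc k)
  then have "Poly_Mapping.lookup ((tder N L ^^ k) (cvar Ux)) (cpx1 Sw + M) = 0"
    "Poly_Mapping.lookup ((tder N L ^^ k) (cvar Sa)) M = 0"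
    using assms(1) by auto
  then show ?case unfolding lookup_funpow_tder_Ux_Suc by simp
qed

lemma lookup_funpow_tder_Sx:
  assumes "\<forall>l<l0. Poly_Mapping.lookup ((tder N L ^^ l) (cvar Sa)) M = 0"
  shows "Poly_Mapping.lookup ((tder N L ^^ (l0 + 2)) (cvar Sx)) (cpx1 Sw + M)
      = kc * ka * Poly_Mapping.lookup ((tder N L ^^ l0) (cvar Sa)) M"
    and "l < l0 + 2 \<Longrightarrow> Poly_Mapping.lookup ((tder N L ^^ l) (cvar Sx)) (cpx1 Sw + M) = 0"
proof -
  have "Poly_Mapping.lookup ((tder N L ^^ (l0 + 2)) (cvar Sx)) (cpx1 Sw + M)
      = kc * Poly_Mapping.lookup ((tder N L ^^ Suc l0) (cvar Ux)) (cpx1 Sw + M)"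
    unfolding add_2_eq_Suc' by (rule lookup_funpow_tder_Sx_Suc)
  also have "\<dots> = kc * (ka * Poly_Mapping.lookup ((tder N L ^^ l0) (cvar Sa)) M
      - (kb + kc) * Poly_Mapping.lookup ((tder N L ^^ l0) (cvar Ux)) (cpx1 Sw + M))"
    by (simp only: lookup_funpow_tder_Ux_Suc)
  finally show "Poly_Mapping.lookup ((tder N L ^^ (l0 + 2)) (cvar Sx)) (cpx1 Sw + M)
      = kc * ka * Poly_Mapping.lookup ((tder N L ^^ l0) (cvar Sa)) M"
    by (simp only: lookup_funpow_tder_Ux_eq_zero[OF assms order.refl]) (simp add: mult.assoc)
  assume "l < l0 + 2"
  then consider "l = 0" | k where "l = Suc k" "k \<le> l0"
    by (cases l) auto
  then show "Poly_Mapping.lookup ((tder N L ^^ l) (cvar Sx)) (cpx1 Sw + M) = 0"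
  proof cases
    case 1
    show ?thesis unfolding 1 funpow_0 by (rule lookup_cvar_target) (use L_n_pos in simp)
  next
    case 2
    then show ?thesis
      unfolding 2(1) lookup_funpow_tder_Sx_Suc lookup_funpow_tder_Ux_eq_zero[OF assms 2(2)] by simp
  qed
qed

end

section \<open>The target is not hopeless\<close>

context cascade
begin

lemma in_upper_layersD: "in_upper_layers L n Y \<Longrightarrow> layer Y < n \<and> \<not> intermediate Y"
  using two_le_n by (auto simp: in_upper_layers_def)

lemma active_cases_in_upper:
  assumes "active c" "\<forall>X\<in>Poly_Mapping.keys M. \<not> intermediate X"
    and "Poly_Mapping.lookup c \<le> Poly_Mapping.lookup M"
  obtains "c = cpx1 Sa"
  | P Q where "reacts N L P Q" "c = cpx1 P + cpx1 Q" "P \<in> Poly_Mapping.keys M" "Q \<in> Poly_Mapping.keys M"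
proof -
  have keys: "Y \<in> Poly_Mapping.keys M" if "1 \<le> Poly_Mapping.lookup c Y" for Y
    using that le_funD[OF assms(3), of Y] by (auto simp: in_keys_iff)
  have "\<not> intermediate Z" if "c = cpx1 Z" for Z
    using keys[of Z] assms(2) that by auto
  with assms(1) consider "c = cpx1 Sa" | P Q W where "associates N L P Q W" "c = cpx1 P + cpx1 Q"
    unfolding active_def by blast
  then show thesis
  proof cases
    case (2 P Q W)
    with keys[of P] keys[of Q] that(2)[OF associates_reacts[OF 2(1)]] show thesis
      by (auto simp: lookup_add)
  qed (use that in blast)
qed

lemma not_Sa_add_reacting_pair_le:
  assumes sqfree: "square_free M"
    and div_cond: "Poly_Mapping.lookup M Sa \<ge> 1 \<longrightarrow> (\<forall>X1\<in>Poly_Mapping.keys M.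
      \<forall>X2\<in>Poly_Mapping.keys M. reacts N L X1 X2 \<longrightarrow> X1 = Sa \<or> X2 = Sa)"
    and PQ: "reacts N L P Q" "P \<in> Poly_Mapping.keys M" "Q \<in> Poly_Mapping.keys M"
  shows "\<not> Poly_Mapping.lookup (cpx1 Sa + (cpx1 P + cpx1 Q)) \<le> Poly_Mapping.lookup M"
proof
  assume le: "Poly_Mapping.lookup (cpx1 Sa + (cpx1 P + cpx1 Q)) \<le> Poly_Mapping.lookup M"
  then have "1 \<le> Poly_Mapping.lookup M Sa"
    using le_funD[OF le, of Sa] by (simp add: lookup_add)
  with div_cond PQ have "P = Sa \<or> Q = Sa" by blast
  then have "2 \<le> Poly_Mapping.lookup M Sa"
    using le_funD[OF le, of Sa] by (auto simp: lookup_add)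
  with sqfree show False by (auto simp: square_free_def dest: spec[of _ Sa])
qed

lemma not_two_active_upper:
  assumes upper: "\<forall>X\<in>Poly_Mapping.keys M. \<not> intermediate X"
    and sqfree: "square_free M"
    and no_two_pairs: "\<not> (\<exists>X1\<in>Poly_Mapping.keys M. \<exists>X2\<in>Poly_Mapping.keys M. \<exists>X3\<in>Poly_Mapping.keys M.
      \<exists>X4\<in>Poly_Mapping.keys M. distinct [X1, X2, X3, X4] \<and> reacts N L X1 X2 \<and> reacts N L X3 X4)"
    and div_cond: "Poly_Mapping.lookup M Sa \<ge> 1 \<longrightarrow> (\<forall>X1\<in>Poly_Mapping.keys M.
      \<forall>X2\<in>Poly_Mapping.keys M. reacts N L X1 X2 \<longrightarrow> X1 = Sa \<or> X2 = Sa)"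
  shows "\<not> two_active (Poly_Mapping.lookup M)"
proof
  assume "two_active (Poly_Mapping.lookup M)"
  then obtain c d where cd: "active c" "active d" "Poly_Mapping.lookup (c + d) \<le> Poly_Mapping.lookup M"
    unfolding two_active_def by blast
  have le1: "Poly_Mapping.lookup (c + d) Y \<le> 1" for Y
    using le_funD[OF cd(3), of Y] sqfree unfolding square_free_def by (meson le_trans)
  have le: "Poly_Mapping.lookup c \<le> Poly_Mapping.lookup M" "Poly_Mapping.lookup d \<le> Poly_Mapping.lookup M"
    using cd(3) unfolding le_fun_def lookup_add by (meson add_leD1 add_leD2)+
  show False
  proof (cases rule: active_cases_in_upper[OF cd(1) upper le(1)])
    case c: 1
    show False
    proof (cases rule: active_cases_in_upper[OF cd(2) upper le(2)])
      case 1
      with c le1[of Sa] show False by (simp add: lookup_add)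
    next
      case (2 P Q)
      with c cd(3) not_Sa_add_reacting_pair_le[OF sqfree div_cond] show False by blast
    qed
  next
    case c: (2 P1 Q1)
    show False
    proof (cases rule: active_cases_in_upper[OF cd(2) upper le(2)])
      case 1
      moreover have "Poly_Mapping.lookup (d + c) \<le> Poly_Mapping.lookup M"
        using cd(3) by (simp add: add.commute)
      ultimately show False using c not_Sa_add_reacting_pair_le[OF sqfree div_cond] by blast
    next
      case (2 P2 Q2)
      have "distinct [P1, Q1, P2, Q2]"
        using le1[of P1] le1[of Q1] le1[of P2] le1[of Q2] c 2
        by (auto simp: lookup_add split: if_splits)
      with c 2 no_two_pairs show False by blast
    qed
  qed
qed

lemma two_active_add_downstream:
  assumes "two_active (Poly_Mapping.lookup (cpx1 Y + m))" "downstream Y"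
  shows "two_active (Poly_Mapping.lookup m)"
proof -
  from assms(1) obtain c d where cd: "active c" "active d"
    "Poly_Mapping.lookup (c + d) \<le> Poly_Mapping.lookup (cpx1 Y + m)"
    unfolding two_active_def by blast
  have "Poly_Mapping.lookup (c + d) \<le> Poly_Mapping.lookup m"
  proof (rule le_funI)
    fix Z
    show "Poly_Mapping.lookup (c + d) Z \<le> Poly_Mapping.lookup m Z"
    proof (cases "Poly_Mapping.lookup (c + d) Z = 0")
      case False
      then have "layer Z < n"
        using active_layer cd(1,2) by (fastforce simp: lookup_add)
      with assms(2) have "Z \<noteq> Y" by (auto simp: downstream_def)
      with le_funD[OF cd(3), of Z] show ?thesis by (simp add: lookup_add)
    qed simp
  qed
  with cd(1,2) show ?thesis unfolding two_active_def by blast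
qed

lemma not_hopeless_target:
  assumes upper: "\<forall>X\<in>Poly_Mapping.keys M. in_upper_layers L n X"
    and sqfree: "square_free M"
    and no_two_pairs: "\<not> (\<exists>X1\<in>Poly_Mapping.keys M. \<exists>X2\<in>Poly_Mapping.keys M. \<exists>X3\<in>Poly_Mapping.keys M.
      \<exists>X4\<in>Poly_Mapping.keys M. distinct [X1, X2, X3, X4] \<and> reacts N L X1 X2 \<and> reacts N L X3 X4)"
    and div_cond: "Poly_Mapping.lookup M Sa \<ge> 1 \<longrightarrow> (\<forall>X1\<in>Poly_Mapping.keys M.
      \<forall>X2\<in>Poly_Mapping.keys M. reacts N L X1 X2 \<longrightarrow> X1 = Sa \<or> X2 = Sa)"
  shows "\<not> hopeless (Poly_Mapping.lookup (cpx1 Sw + M))"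
proof -
  let ?g = "Poly_Mapping.lookup (cpx1 Sw + M)"
  have M_up: "layer Y < n \<and> \<not> intermediate Y" if "1 \<le> Poly_Mapping.lookup M Y" for Y
    using that upper in_upper_layersD by (simp add: in_keys_iff)
  have down: "Y = Sw \<and> ?g Y = 1" if "downstream Y" "1 \<le> ?g Y" for Y
    using that M_up[of Y]
    by (cases "Poly_Mapping.lookup M Y") (auto simp: downstream_def lookup_add split: if_splits)
  have "\<not> two_downstream ?g"
  proof
    assume "two_downstream ?g"
    then obtain Y1 Y2 where "downstream Y1" "downstream Y2"
      "Poly_Mapping.lookup (cpx1 Y1 + cpx1 Y2) \<le> ?g"
      unfolding two_downstream_def by blast
    then show False
      using down[of Y1] down[of Y2]
      by (cases "Y1 = Y2") (auto simp: lookup_cpx1_add_cpx1_le_iff)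
  qed
  moreover have "\<not> has_dead ?g" "\<not> has_stray ?g"
    using down by (force simp: has_dead_def dead_def downstream_def has_stray_def stray_def)+
  moreover have "\<not> two_active ?g"
  proof
    assume "two_active ?g"
    then have "two_active (Poly_Mapping.lookup M)"
      by (rule two_active_add_downstream[of Sw]) (simp add: downstream_def)
    moreover have "\<forall>X\<in>Poly_Mapping.keys M. \<not> intermediate X"
      using upper in_upper_layersD by blast
    ultimately show False
      using not_two_active_upper sqfree no_two_pairs div_cond by blast
  qed
  ultimately show ?thesis unfolding hopeless_def by blast
qed

end

theorem mainTheorem17:
  fixes N n l0 :: nat and L :: "nat \<Rightarrow> nat" and M :: complex and CM :: rpoly
  assumes N_pos: "1 \<le> N"
    and L_pos: "\<forall>m\<in>{1..N}. 1 \<le> L m"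
    and n_range: "2 \<le> n" "n \<le> N"
    and l0_pos: "1 \<le> l0"
    and appears_l0: "appears M (iterder N L l0 (S (n - 1) (L (n - 1))))"
    and not_before: "\<forall>l. 1 \<le> l \<and> l < l0 \<longrightarrow> \<not> appears M (iterder N L l (S (n - 1) (L (n - 1))))"
    and coeff: "CM = Poly_Mapping.lookup (iterder N L l0 (S (n - 1) (L (n - 1)))) M"
    and species_M: "\<forall>X\<in>Poly_Mapping.keys M. in_upper_layers L n X"
    and sqfree: "square_free M"
    and no_two_pairs: "\<not> (\<exists>X1\<in>Poly_Mapping.keys M. \<exists>X2\<in>Poly_Mapping.keys M. \<exists>X3\<in>Poly_Mapping.keys M. \<exists>X4\<in>Poly_Mapping.keys M.
            distinct [X1, X2, X3, X4] \<and> reacts N L X1 X2 \<and> reacts N L X3 X4)"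
    and div_cond: "Poly_Mapping.lookup M (S (n - 1) (L (n - 1))) \<ge> 1 \<longrightarrow>
            (\<forall>X1\<in>Poly_Mapping.keys M. \<forall>X2\<in>Poly_Mapping.keys M. reacts N L X1 X2 \<longrightarrow>
               X1 = S (n - 1) (L (n - 1)) \<or> X2 = S (n - 1) (L (n - 1)))"
  shows "appears (Poly_Mapping.single (S n (L n - 1)) 1 + M) (iterder N L (l0 + 2) (S n (L n)))
    \<and> (\<forall>l. 1 \<le> l \<and> l < l0 + 2 \<longrightarrow>
          \<not> appears (Poly_Mapping.single (S n (L n - 1)) 1 + M) (iterder N L l (S n (L n))))
    \<and> Poly_Mapping.lookup (iterder N L (l0 + 2) (S n (L n))) (Poly_Mapping.single (S n (L n - 1)) 1 + M)
        = rconst (Rc n (L n)) * rconst (Ra n (L n)) * CM"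
proof -
  interpret cascade N L n
    using n_range L_pos by unfold_locales auto
  interpret cascade_target N L n M
    by unfold_locales (rule not_hopeless_target[OF species_M sqfree no_two_pairs div_cond])
  have CM: "CM = Poly_Mapping.lookup ((tder N L ^^ l0) (cvar Sa)) M" "CM \<noteq> 0"
    using coeff appears_l0 by (simp_all add: appears_def iterder_def)
  then have "Poly_Mapping.lookup (cvar Sa) M = 0"
    using lookup_funpow_tder_cpx1_eq_zero[OF l0_pos]
    by (auto simp: cvar_eq_single_cpx1 lookup_single when_def)
  with not_before have "\<forall>l<l0. Poly_Mapping.lookup ((tder N L ^^ l) (cvar Sa)) M = 0"
    by (metis appears_def iterder_def funpow_0 less_one not_less)
  note Sx = lookup_funpow_tder_Sx[OF this]
  have target: "Poly_Mapping.single (S n (L n - 1)) 1 + M = cpx1 Sw + M"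
    by (simp add: cpx1_def)
  show ?thesis
    unfolding appears_def iterder_def target Sx(1)
    using Sx(2) CM rconst_mult_rconst_mult_neq_zero by auto
qed

end
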